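(* Let $\rho_0\in\mathcal P_2(\mathbb R^d)$, $\mathbb H:=L^2(\mathbb R^d;\rho_0)$, and let $\phi:\mathcal P_2(\mathbb R^d)\to\mathbb R$ be such that the lift $\phi^{\#}_{\rho_0}$ is Fréchet differentiable on $\mathbb H$, bounded, with bounded gradient, and with globally Lipschitz gradient, with Lipschitz constant \[L(\phi):=\sup_{\xi_1\neq\xi_2\in\mathbb H}\frac{\|\nabla\phi^{\#}_{\rho_0}(\xi_1)-\nabla\phi^{\#}_{\rho_0}(\xi_2)\|_{\mathbb H}}{\|\xi_1-\xi_2\|_{\mathbb H}}\in(0,\infty).\] Let $X:[0,\infty)\to\mathbb H$ be the unique $C^1$ solution of $\dot X(t)=-\nabla\phi^{\#}_{\rho_0}(X(t))$, $X(0)=\mathrm{Id}$. Fix $T>0$ and $\alpha\in(0,1]$, and assume that $t\mapsto\dot X(t)$ is Fréchet differentiable from $[0,T]$ to $\mathbb H$ with derivative $\ddot X$ and that \[L_\alpha(T,\ddot X):=\sup_{t\neq s\in[0,T]}\frac{\|\dot X(t)-\dot X(s)-(t-s)\ddot X(s)\|_{\mathbb H}}{|t-s|^{1+\alpha}}<\infty.\] Let $0<\tau\le 1/L(\phi)$, let $X_0^\tau\in\mathbb H$, and let $(X_n^\tau)_{n\ge0}$ be the iterates of the Lagrangian trapezoidal scheme (which are well defined and unique under these hypotheses). Then for every $n\in\mathbb N$ with $n\tau\le T$, \[W_2\big((X(n\tau))_{\#}\rho_0,(X_n^\tau)_{\#}\rho_0\big)\le\|X_n^\tau-X(n\tau)\|_{\mathbb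 H}\le e^{2L(\phi)T}\|X_0^\tau-\mathrm{Id}\|_{\mathbb H}+2\frac{L_\alpha(T,\ddot X)}{L(\phi)}\big(e^{2L(\phi)T}-1\big)\tau^{1+\alpha}.\]
   Context: $\mathcal P_2(\mathbb R^d)$ is the set of Borel probability measures on $\mathbb R^d$ with finite second moment and $W_2$ the quadratic Wasserstein distance. For $\rho_0\in\mathcal P_2(\mathbb R^d)$, $\mathbb H=L^2(\mathbb R^d;\rho_0)$ is the Hilbert space of ($\rho_0$-a.e. classes of) Borel maps $\xi:\mathbb R^d\to\mathbb R^d$ with $\int|\xi|^2d\rho_0<\infty$, inner product $\langle\xi_1,\xi_2\rangle_{\mathbb H}=\int\langle\xi_1(x),\xi_2(x)\rangle d\rho_0(x)$; $\mathrm{Id}$ is the identity map. For $\phi:\mathcal P_2(\mathbb R^d)\to\mathbb R$ the lift is $\phi^{\#}_{\rho_0}:\mathbb H\to\mathbb R$, $\phi^{\#}_{\rho_0}(\xi):=\phi(\xi_{\#}\rho_0)$, and $\nabla\phi^{\#}_{\rho_0}(\xi)\in\mathbb H$ denotes its Fréchet gradient. Lagrangian trapezoidal scheme: given $X_0^\tau\in\mathbb H$, for $n\ge0$, \[X_{n+1}^\tau\in\arg\min_{\xi\in\mathbb H}\Big\{\tfrac12\phi^{\#}_{\rho_0}(\xi)+\tfrac12\langle\nabla\phi^{\#}_{\rho_0}(X_n^\tau),\xi\rangle_{\mathbb H}+\tfrac1{2\tau}\|\xi-X_n^\tau\|_{\mathbb H}^2\Big\}.\] *)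

theory Defs
  imports "HOL-Analysis.Analysis" "HOL-Probability.Probability"
begin

definition P2 :: "('a::euclidean_space) measure set" where
  "P2 = {\<mu>. sets \<mu> = sets borel \<and> prob_space \<mu> \<and> (\<integral>\<^sup>+ x. ennreal (norm x ^ 2) \<partial>\<mu>) < \<infinity>}"

definition couplings :: "'a::euclidean_space measure \<Rightarrow> 'a measure \<Rightarrow> ('a \<times> 'a) measure set" where
  "couplings \<mu> \<nu> = {\<pi>. sets \<pi> = sets borel \<and> prob_space \<pi> \<and>
      distr \<pi> borel fst = \<mu> \<and> distr \<pi> borel snd = \<nu>}"

definition W2 :: "'a::euclidean_space measure \<Rightarrow> 'a measure \<Rightarrow> real" where
  "W2 \<mu> \<nu> = sqrt (enn2real (INF \<pi>\<in>couplings \<mu> \<nu>. \<integral>\<^sup>+ p. ennreal (norm (fst p - snd p) ^ 2) \<partial>\<pi>))"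

text \<open>The Hilbert space H = L^2(R^d; rho0) of maps (elements are representatives;
  all notions below only depend on rho0-a.e. classes).\<close>
definition L2space :: "'a::euclidean_space measure \<Rightarrow> ('a \<Rightarrow> 'a) set" where
  "L2space \<rho> = {\<xi>. \<xi> \<in> borel_measurable \<rho> \<and> integrable \<rho> (\<lambda>x. norm (\<xi> x) ^ 2)}"

definition H_inner :: "'a::euclidean_space measure \<Rightarrow> ('a \<Rightarrow> 'a) \<Rightarrow> ('a \<Rightarrow> 'a) \<Rightarrow> real" where
  "H_inner \<rho> \<xi> \<eta> = (\<integral>x. \<xi> x \<bullet> \<eta> x \<partial>\<rho>)"

definition H_norm :: "'a::euclidean_space measure \<Rightarrow> ('a \<Rightarrow> 'a) \<Rightarrow> real" where
  "H_norm \<rho> \<xi> = sqrt (\<integral>x. norm (\<xi> x) ^ 2 \<partial>\<rho>)"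

definition lift :: "'a::euclidean_space measure \<Rightarrow> ('a measure \<Rightarrow> real) \<Rightarrow> ('a \<Rightarrow> 'a) \<Rightarrow> real" where
  "lift \<rho> \<phi> \<xi> = \<phi> (distr \<rho> borel \<xi>)"

definition is_frechet_gradient ::
  "'a::euclidean_space measure \<Rightarrow> ('a measure \<Rightarrow> real) \<Rightarrow> (('a \<Rightarrow> 'a) \<Rightarrow> ('a \<Rightarrow> 'a)) \<Rightarrow> bool" where
  "is_frechet_gradient \<rho> \<phi> G \<longleftrightarrow>
     (\<forall>\<xi>\<in>L2space \<rho>. G \<xi> \<in> L2space \<rho> \<and>
        (\<forall>\<epsilon>>0. \<exists>\<delta>>0. \<forall>\<eta>\<in>L2space \<rho>. H_norm \<rho> (\<lambda>x. \<eta> x - \<xi> x) < \<delta> \<longrightarrow>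
           \<bar>lift \<rho> \<phi> \<eta> - lift \<rho> \<phi> \<xi> - H_inner \<rho> (G \<xi>) (\<lambda>x. \<eta> x - \<xi> x)\<bar>
             \<le> \<epsilon> * H_norm \<rho> (\<lambda>x. \<eta> x - \<xi> x)))"

definition lip_ratios :: "'a::euclidean_space measure \<Rightarrow> (('a \<Rightarrow> 'a) \<Rightarrow> ('a \<Rightarrow> 'a)) \<Rightarrow> real set" where
  "lip_ratios \<rho> G = {H_norm \<rho> (\<lambda>x. G \<xi>1 x - G \<xi>2 x) / H_norm \<rho> (\<lambda>x. \<xi>1 x - \<xi>2 x) | \<xi>1 \<xi>2.
      \<xi>1 \<in> L2space \<rho> \<and> \<xi>2 \<in> L2space \<rho> \<and> H_norm \<rho> (\<lambda>x. \<xi>1 x - \<xi>2 x) \<noteq> 0}"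

definition Lip_const :: "'a::euclidean_space measure \<Rightarrow> (('a \<Rightarrow> 'a) \<Rightarrow> ('a \<Rightarrow> 'a)) \<Rightarrow> real" where
  "Lip_const \<rho> G = Sup (lip_ratios \<rho> G)"

definition has_H_derivative ::
  "'a::euclidean_space measure \<Rightarrow> (real \<Rightarrow> 'a \<Rightarrow> 'a) \<Rightarrow> ('a \<Rightarrow> 'a) \<Rightarrow> real \<Rightarrow> real set \<Rightarrow> bool" where
  "has_H_derivative \<rho> X D t S \<longleftrightarrow>
     (\<forall>\<epsilon>>0. \<exists>\<delta>>0. \<forall>s\<in>S. \<bar>s - t\<bar> < \<delta> \<longrightarrow>
        H_norm \<rho> (\<lambda>x. X s x - X t x - (s - t) *\<^sub>R D x) \<le> \<epsilon> * \<bar>s - t\<bar>)"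

definition H_continuous_at ::
  "'a::euclidean_space measure \<Rightarrow> (real \<Rightarrow> 'a \<Rightarrow> 'a) \<Rightarrow> real \<Rightarrow> real set \<Rightarrow> bool" where
  "H_continuous_at \<rho> X t S \<longleftrightarrow>
     (\<forall>\<epsilon>>0. \<exists>\<delta>>0. \<forall>s\<in>S. \<bar>s - t\<bar> < \<delta> \<longrightarrow> H_norm \<rho> (\<lambda>x. X s x - X t x) \<le> \<epsilon>)"

definition holder_ratios ::
  "'a::euclidean_space measure \<Rightarrow> real \<Rightarrow> real \<Rightarrow> (real \<Rightarrow> 'a \<Rightarrow> 'a) \<Rightarrow> (real \<Rightarrow> 'a \<Rightarrow> 'a) \<Rightarrow> real set" where
  "holder_ratios \<rho> T \<alpha> Xd Xdd =
     {H_norm \<rho> (\<lambda>x. Xd t x - Xd s x - (t - s) *\<^sub>R Xdd s x) / \<bar>t - s\<bar> powr (1 + \<alpha>) | t s.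
        t \<in> {0..T} \<and> s \<in> {0..T} \<and> t \<noteq> s}"

definition L_alpha ::
  "'a::euclidean_space measure \<Rightarrow> real \<Rightarrow> real \<Rightarrow> (real \<Rightarrow> 'a \<Rightarrow> 'a) \<Rightarrow> (real \<Rightarrow> 'a \<Rightarrow> 'a) \<Rightarrow> real" where
  "L_alpha \<rho> T \<alpha> Xd Xdd = Sup (holder_ratios \<rho> T \<alpha> Xd Xdd)"

definition trap_obj ::
  "'a::euclidean_space measure \<Rightarrow> ('a measure \<Rightarrow> real) \<Rightarrow> (('a \<Rightarrow> 'a) \<Rightarrow> ('a \<Rightarrow> 'a)) \<Rightarrow> real
     \<Rightarrow> ('a \<Rightarrow> 'a) \<Rightarrow> ('a \<Rightarrow> 'a) \<Rightarrow> real" where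
  "trap_obj \<rho> \<phi> G \<tau> Y \<xi> =
     lift \<rho> \<phi> \<xi> / 2 + H_inner \<rho> (G Y) \<xi> / 2 + H_norm \<rho> (\<lambda>x. \<xi> x - Y x) ^ 2 / (2 * \<tau>)"

end

theory Submission
  imports Defs
begin

text \<open>The first-order condition of each minimisation step says that the iterates satisfy the
  implicit trapezoidal rule X_(n+1) = X_n - (tau/2) (grad phi(X_(n+1)) + grad phi(X_n)) in H.
  The exact flow satisfies the same relation up to a local truncation error of order
  L_alpha tau^(2+alpha), which is obtained by testing the remainder against itself, so that only
  the scalar mean value theorem is needed. Subtracting the two relations and using the Lipschitz
  bound gives e_(n+1) \<le> e_n + (L tau/2)(e_(n+1) + e_n) + O(tau^(2+alpha)); as L tau \<le> 1 this
  becomes e_(n+1) \<le> exp(2 L tau) e_n + O(tau^(2+alpha)), and a discrete Gronwall argument sums the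
  local errors. The Wasserstein estimate is the transport cost of the coupling induced by the
  pair of maps.\<close>

lemma integrable_inner_L2space:
  assumes "a \<in> L2space M" "b \<in> L2space M"
  shows "integrable M (\<lambda>x. a x \<bullet> b x)"
proof (rule Bochner_Integration.integrable_bound[where f="\<lambda>x. norm (a x) ^ 2 + norm (b x) ^ 2"])
  show "integrable M (\<lambda>x. norm (a x) ^ 2 + norm (b x) ^ 2)"
    using assms unfolding L2space_def by simp
  show "(\<lambda>x. a x \<bullet> b x) \<in> borel_measurable M"
    using assms unfolding L2space_def by (intro borel_measurable_inner) auto
  have "\<bar>a x \<bullet> b x\<bar> \<le> norm (a x) ^ 2 + norm (b x) ^ 2" for x
    using Cauchy_Schwarz_ineq2[of "a x" "b x"] sum_squares_bound[of "norm (a x)" "norm (b x)"]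
      mult_nonneg_nonneg[OF norm_ge_zero[of "a x"] norm_ge_zero[of "b x"]]
    by linarith
  then show "AE x in M. norm (a x \<bullet> b x) \<le> norm (norm (a x) ^ 2 + norm (b x) ^ 2)"
    by simp
qed

lemma L2space_add:
  assumes "a \<in> L2space M" "b \<in> L2space M"
  shows "(\<lambda>x. a x + b x) \<in> L2space M"
proof -
  have "norm (a x + b x) ^ 2 = norm (a x) ^ 2 + 2 * (a x \<bullet> b x) + norm (b x) ^ 2" for x
    by (simp add: power2_norm_eq_inner inner_add_left inner_add_right inner_commute)
  moreover have "integrable M (\<lambda>x. norm (a x) ^ 2 + 2 * (a x \<bullet> b x) + norm (b x) ^ 2)"
    using assms integrable_inner_L2space[OF assms] unfolding L2space_def by simp
  ultimately show ?thesis
    using assms unfolding L2space_def by (simp add: borel_measurable_add)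
qed

lemma L2space_scaleR:
  assumes "a \<in> L2space M"
  shows "(\<lambda>x. c *\<^sub>R a x) \<in> L2space M"
  using assms unfolding L2space_def by (simp add: power_mult_distrib borel_measurable_scaleR)

lemma L2space_diff:
  assumes "a \<in> L2space M" "b \<in> L2space M"
  shows "(\<lambda>x. a x - b x) \<in> L2space M"
  using L2space_add[OF assms(1) L2space_scaleR[OF assms(2), of "-1"]] by simp

lemmas L2space_closed = L2space_add L2space_diff L2space_scaleR

lemma L2space_const: "finite_measure M \<Longrightarrow> (\<lambda>x. v) \<in> L2space M"
  unfolding L2space_def by (simp add: finite_measure.integrable_const)

lemma L2space_ident:
  assumes "\<rho> \<in> P2"
  shows "(\<lambda>x. x) \<in> L2space \<rho>"
proof -
  have sets: "sets \<rho> = sets borel" and moment: "(\<integral>\<^sup>+ x. ennreal (norm x ^ 2) \<partial>\<rho>) < \<infinity>"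
    using assms unfolding P2_def by auto
  have "(\<lambda>x. x) \<in> borel_measurable \<rho>"
    using sets by (rule measurable_ident_sets)
  moreover from this have "integrable \<rho> (\<lambda>x. norm x ^ 2)"
    using moment by (intro integrableI_bounded) auto
  ultimately show ?thesis unfolding L2space_def by simp
qed

lemma H_norm_nonneg: "H_norm M a \<ge> 0"
  unfolding H_norm_def by simp

lemma H_norm_square: "H_norm M a ^ 2 = (\<integral>x. norm (a x) ^ 2 \<partial>M)"
  unfolding H_norm_def by simp

lemma H_norm_scaleR: "H_norm M (\<lambda>x. c *\<^sub>R a x) = \<bar>c\<bar> * H_norm M a"
  unfolding H_norm_def by (simp add: power_mult_distrib real_sqrt_mult)

lemma H_norm_minus_commute: "H_norm M (\<lambda>x. b x - a x) = H_norm M (\<lambda>x. a x - b x)"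
  using H_norm_scaleR[of M "-1" "\<lambda>x. a x - b x"] by simp

lemma H_inner_self: "H_inner M a a = H_norm M a ^ 2"
  unfolding H_inner_def H_norm_square by (simp add: power2_norm_eq_inner)

lemma H_inner_commute: "H_inner M a b = H_inner M b a"
  unfolding H_inner_def by (simp add: inner_commute)

lemma H_inner_add_left:
  "a \<in> L2space M \<Longrightarrow> b \<in> L2space M \<Longrightarrow> c \<in> L2space M \<Longrightarrow>
    H_inner M (\<lambda>x. a x + b x) c = H_inner M a c + H_inner M b c"
  unfolding H_inner_def by (simp add: inner_add_left integrable_inner_L2space)

lemma H_inner_diff_left:
  "a \<in> L2space M \<Longrightarrow> b \<in> L2space M \<Longrightarrow> c \<in> L2space M \<Longrightarrow>
    H_inner M (\<lambda>x. a x - b x) c = H_inner M a c - H_inner M b c"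
  unfolding H_inner_def by (simp add: inner_diff_left integrable_inner_L2space)

lemma H_inner_scaleR_left: "H_inner M (\<lambda>x. t *\<^sub>R a x) c = t * H_inner M a c"
  unfolding H_inner_def by simp

lemma H_norm_add_square:
  assumes "a \<in> L2space M" "b \<in> L2space M"
  shows "H_norm M (\<lambda>x. a x + b x) ^ 2 = H_norm M a ^ 2 + 2 * H_inner M a b + H_norm M b ^ 2"
proof -
  have "norm (a x + b x) ^ 2 = norm (a x) ^ 2 + 2 * (a x \<bullet> b x) + norm (b x) ^ 2" for x
    by (simp add: power2_norm_eq_inner inner_add_left inner_add_right inner_commute)
  then show ?thesis
    using assms integrable_inner_L2space[OF assms] unfolding H_norm_square H_inner_def L2space_def
    by simp
qed

lemma discriminant_le_of_quadratic_nonneg: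
  fixes A B C :: real
  assumes quad: "\<And>t. 0 \<le> A + 2 * t * B + t^2 * C" and "C \<ge> 0"
  shows "B^2 \<le> A * C"
proof (cases "C = 0")
  case True
  have "B = 0"
  proof (rule ccontr)
    assume "B \<noteq> 0"
    then show False
      using quad[of "- (A + 1) / (2 * B)"] True by (simp add: field_simps)
  qed
  then show ?thesis using quad[of 0] True by simp
next
  case False
  with \<open>C \<ge> 0\<close> have "C > 0" by simp
  then have "0 \<le> A - B^2 / C"
    using quad[of "- B / C"] by (simp add: power2_eq_square field_simps)
  with \<open>C > 0\<close> show ?thesis by (simp add: field_simps)
qed

lemma H_inner_Cauchy_Schwarz:
  assumes "a \<in> L2space M" "b \<in> L2space M"
  shows "\<bar>H_inner M a b\<bar> \<le> H_norm M a * H_norm M b"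
proof -
  have "0 \<le> H_norm M a ^ 2 + 2 * t * H_inner M a b + t^2 * H_norm M b ^ 2" for t
    using H_norm_add_square[OF assms(1) L2space_scaleR[OF assms(2)], of t]
    by (simp add: H_norm_scaleR H_inner_commute[of M a] H_inner_scaleR_left power_mult_distrib)
      (metis mult.assoc zero_le_power2)
  then have "H_inner M a b ^ 2 \<le> (H_norm M a * H_norm M b) ^ 2"
    unfolding power_mult_distrib by (rule discriminant_le_of_quadratic_nonneg) simp
  then show ?thesis
    using abs_le_square_iff[of "H_inner M a b" "H_norm M a * H_norm M b"]
      H_norm_nonneg[of M a] H_norm_nonneg[of M b] by simp
qed

lemma H_norm_triangle:
  assumes "a \<in> L2space M" "b \<in> L2space M"
  shows "H_norm M (\<lambda>x. a x + b x) \<le> H_norm M a + H_norm M b"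
proof (rule power2_le_imp_le)
  show "H_norm M (\<lambda>x. a x + b x) ^ 2 \<le> (H_norm M a + H_norm M b) ^ 2"
    unfolding H_norm_add_square[OF assms] power2_sum
    using H_inner_Cauchy_Schwarz[OF assms] by simp
qed (simp add: H_norm_nonneg add_nonneg_nonneg)

lemma H_norm_triangle_diff:
  assumes "a \<in> L2space M" "b \<in> L2space M"
  shows "H_norm M (\<lambda>x. a x - b x) \<le> H_norm M a + H_norm M b"
  using H_norm_triangle[OF assms(1) L2space_scaleR[OF assms(2)], of "-1"]
    H_norm_scaleR[of M "-1" b]
  by simp

lemma H_norm_dist_triangle:
  assumes "a \<in> L2space M" "b \<in> L2space M" "c \<in> L2space M"
  shows "H_norm M (\<lambda>x. a x - c x) \<le> H_norm M (\<lambda>x. a x - b x) + H_norm M (\<lambda>x. b x - c x)"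
  using H_norm_triangle[of "\<lambda>x. a x - b x" M "\<lambda>x. b x - c x"] assms
  by (simp add: L2space_diff)

lemma H_norm_const_pos:
  assumes "prob_space M" "v \<noteq> 0"
  shows "H_norm M (\<lambda>x. v) > 0"
  using assms unfolding H_norm_def by (simp add: prob_space.prob_space)

lemma Lip_const_bound_nonnull:
  assumes "bdd_above (lip_ratios M G)" "a \<in> L2space M" "b \<in> L2space M"
    and "H_norm M (\<lambda>x. a x - b x) \<noteq> 0"
  shows "H_norm M (\<lambda>x. G a x - G b x) \<le> Lip_const M G * H_norm M (\<lambda>x. a x - b x)"
proof -
  have "H_norm M (\<lambda>x. G a x - G b x) / H_norm M (\<lambda>x. a x - b x) \<in> lip_ratios M G"
    unfolding lip_ratios_def using assms(2-4) by blast
  then have "H_norm M (\<lambda>x. G a x - G b x) / H_norm M (\<lambda>x. a x - b x) \<le> Lip_const M G"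
    unfolding Lip_const_def using assms(1) by (rule cSup_upper)
  moreover have "H_norm M (\<lambda>x. a x - b x) > 0"
    using assms(4) H_norm_nonneg[of M] by (simp add: order_less_le)
  ultimately show ?thesis by (simp add: divide_le_eq mult.commute)
qed

lemma nonpos_if_le_mult_pos:
  fixes x K :: real
  assumes "\<And>c. c > 0 \<Longrightarrow> x \<le> K * c"
  shows "x \<le> 0"
proof (rule field_le_epsilon)
  fix e :: real
  assume "e > 0"
  show "x \<le> 0 + e"
  proof (cases "K > 0")
    case True
    then show ?thesis using assms[of "e / K"] \<open>e > 0\<close> by simp
  next
    case False
    then show ?thesis using assms[of 1] \<open>e > 0\<close> by simp
  qed
qed

text \<open>The difference quotients in lip_ratios only range over pairs at positive distance, so
  pairs at distance zero are handled by moving one point away by a small constant map.\<close>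
lemma Lip_const_bound:
  fixes M :: "'a::euclidean_space measure"
  assumes P: "prob_space M" and bdd: "bdd_above (lip_ratios M G)"
    and G_L2: "\<And>\<xi>. \<xi> \<in> L2space M \<Longrightarrow> G \<xi> \<in> L2space M"
    and \<xi>: "\<xi> \<in> L2space M" "\<zeta> \<in> L2space M"
  shows "H_norm M (\<lambda>x. G \<xi> x - G \<zeta> x) \<le> Lip_const M G * H_norm M (\<lambda>x. \<xi> x - \<zeta> x)"
proof (cases "H_norm M (\<lambda>x. \<xi> x - \<zeta> x) = 0")
  case False
  then show ?thesis using Lip_const_bound_nonnull[OF bdd \<xi>] by blast
next
  case null: True
  let ?L = "Lip_const M G"
  obtain v :: 'a where "v \<noteq> 0" using nonzero_Basis by blast
  define w where "w = (\<lambda>x::'a. v)"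
  have w: "w \<in> L2space M" "H_norm M w > 0"
    unfolding w_def using P \<open>v \<noteq> 0\<close>
    by (auto intro: L2space_const H_norm_const_pos simp: prob_space.finite_measure)
  have shifted: "H_norm M (\<lambda>x. G \<xi> x - G \<zeta> x) \<le> 2 * ?L * c * H_norm M w" if "c > 0" for c
  proof -
    define \<eta> where "\<eta> = (\<lambda>x. \<xi> x + c *\<^sub>R w x)"
    have \<eta>: "\<eta> \<in> L2space M" unfolding \<eta>_def using \<xi> w by (intro L2space_closed)
    have "(\<lambda>x. \<xi> x - \<eta> x) = (\<lambda>x. (- c) *\<^sub>R w x)" unfolding \<eta>_def by auto
    then have d\<xi>\<eta>: "H_norm M (\<lambda>x. \<xi> x - \<eta> x) = c * H_norm M w"
      using H_norm_scaleR[of M "- c" w] \<open>c > 0\<close> by simp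
    have "H_norm M (\<lambda>x. \<xi> x - \<eta> x) \<le> H_norm M (\<lambda>x. \<xi> x - \<zeta> x) + H_norm M (\<lambda>x. \<zeta> x - \<eta> x)"
      by (rule H_norm_dist_triangle[OF \<xi> \<eta>])
    then have d\<eta>\<zeta>: "H_norm M (\<lambda>x. \<eta> x - \<zeta> x) = c * H_norm M w"
      using H_norm_dist_triangle[OF \<eta> \<xi>] d\<xi>\<eta> null
        H_norm_minus_commute[of M \<eta> \<xi>] H_norm_minus_commute[of M \<zeta> \<eta>]
      by (simp add: order_antisym)
    have "H_norm M (\<lambda>x. G \<xi> x - G \<zeta> x)
        \<le> H_norm M (\<lambda>x. G \<xi> x - G \<eta> x) + H_norm M (\<lambda>x. G \<eta> x - G \<zeta> x)"
      using G_L2 \<xi> \<eta> by (intro H_norm_dist_triangle) auto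
    also have "\<dots> \<le> ?L * H_norm M (\<lambda>x. \<xi> x - \<eta> x) + ?L * H_norm M (\<lambda>x. \<eta> x - \<zeta> x)"
      using \<open>c > 0\<close> w d\<xi>\<eta> d\<eta>\<zeta> \<xi> \<eta>
      by (intro add_mono Lip_const_bound_nonnull[OF bdd]) auto
    finally show ?thesis using d\<xi>\<eta> d\<eta>\<zeta> by (simp add: algebra_simps)
  qed
  have "H_norm M (\<lambda>x. G \<xi> x - G \<zeta> x) \<le> 0"
    using shifted by (intro nonpos_if_le_mult_pos[of _ "2 * ?L * H_norm M w"]) (simp add: ac_simps)
  then show ?thesis using null by simp
qed

lemma has_H_derivative_subset:
  "has_H_derivative M X D t S \<Longrightarrow> T \<subseteq> S \<Longrightarrow> has_H_derivative M X D t T"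
  unfolding has_H_derivative_def by blast

lemma has_field_derivative_H_inner:
  assumes deriv: "has_H_derivative M X D t S" and X: "\<forall>s\<in>S. X s \<in> L2space M" and "t \<in> S"
    and D: "D \<in> L2space M" and R: "R \<in> L2space M"
  shows "((\<lambda>s. H_inner M (X s) R) has_field_derivative H_inner M D R) (at t within S)"
  unfolding has_field_derivative_iff Lim_within
proof (intro allI impI)
  fix e :: real
  assume "e > 0"
  define \<epsilon> where "\<epsilon> = e / (2 * (H_norm M R + 1))"
  have "\<epsilon> > 0" unfolding \<epsilon>_def using \<open>e > 0\<close> H_norm_nonneg[of M R] by simp
  then obtain \<delta> where "\<delta> > 0" and \<delta>: "\<And>s. s \<in> S \<Longrightarrow> \<bar>s - t\<bar> < \<delta> \<Longrightarrow>
        H_norm M (\<lambda>x. X s x - X t x - (s - t) *\<^sub>R D x) \<le> \<epsilon> * \<bar>s - t\<bar>"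
    using deriv unfolding has_H_derivative_def by blast
  have "\<bar>(H_inner M (X s) R - H_inner M (X t) R) / (s - t) - H_inner M D R\<bar> < e"
    if s: "s \<in> S" "s \<noteq> t" "\<bar>s - t\<bar> < \<delta>" for s
  proof -
    have Xs: "X s \<in> L2space M" "X t \<in> L2space M" using X s \<open>t \<in> S\<close> by auto
    have "H_inner M (\<lambda>x. X s x - X t x - (s - t) *\<^sub>R D x) R
        = H_inner M (X s) R - H_inner M (X t) R - (s - t) * H_inner M D R"
      by (simp add: H_inner_diff_left L2space_closed Xs D R H_inner_scaleR_left)
    then have "(H_inner M (X s) R - H_inner M (X t) R) / (s - t) - H_inner M D R
        = H_inner M (\<lambda>x. X s x - X t x - (s - t) *\<^sub>R D x) R / (s - t)"
      using s by (simp add: field_simps)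
    also have "\<bar>\<dots>\<bar> \<le> H_norm M (\<lambda>x. X s x - X t x - (s - t) *\<^sub>R D x) * H_norm M R / \<bar>s - t\<bar>"
      unfolding abs_divide using Xs D R
      by (intro divide_right_mono H_inner_Cauchy_Schwarz L2space_closed) auto
    also have "\<dots> \<le> \<epsilon> * \<bar>s - t\<bar> * H_norm M R / \<bar>s - t\<bar>"
      using \<delta>[OF s(1,3)] by (intro divide_right_mono mult_right_mono) (auto simp: H_norm_nonneg)
    also have "\<dots> = \<epsilon> * H_norm M R" using s by simp
    also have "\<dots> < e"
      unfolding \<epsilon>_def using \<open>e > 0\<close> H_norm_nonneg[of M R]
      by (simp add: field_simps add_nonneg_pos)
    finally show ?thesis .
  qed
  then show "\<exists>\<delta>>0. \<forall>s\<in>S. 0 < dist s t \<and> dist s t < \<delta> \<longrightarrow>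
      dist ((H_inner M (X s) R - H_inner M (X t) R) / (s - t)) (H_inner M D R) < e"
    using \<open>\<delta> > 0\<close> by (auto simp: dist_real_def)
qed

lemma H_inner_Taylor_remainder_bound:
  assumes curve: "\<forall>t\<in>{a..b}. X t \<in> L2space M \<and> Xd t \<in> L2space M \<and> has_H_derivative M X (Xd t) t {a..b}"
    and A: "A \<in> L2space M" and R: "R \<in> L2space M"
    and holder: "\<forall>t\<in>{a<..b}. H_norm M (\<lambda>x. Xd t x - Xd a x - (t - a) *\<^sub>R A x) \<le> K * (t - a) powr (1 + \<alpha>)"
    and "K \<ge> 0" "a \<le> b" "\<alpha> \<ge> 0"
  shows "\<bar>H_inner M (\<lambda>x. X b x - X a x - (b - a) *\<^sub>R Xd a x - ((b - a)^2 / 2) *\<^sub>R A x) R\<bar>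
    \<le> K * (b - a) powr (1 + \<alpha>) * H_norm M R * (b - a)"
proof -
  have X: "X t \<in> L2space M" "Xd t \<in> L2space M" if "t \<in> {a..b}" for t
    using curve that by auto
  have a: "a \<in> {a..b}" and b: "b \<in> {a..b}" using \<open>a \<le> b\<close> by auto
  define g where "g s = H_inner M (X s) R - (s - a) * H_inner M (Xd a) R - ((s - a)^2 / 2) * H_inner M A R" for s
  define g' where "g' s = H_inner M (\<lambda>x. Xd s x - Xd a x - (s - a) *\<^sub>R A x) R" for s
  have "(g has_field_derivative g' s) (at s within {a..b})" if s: "s \<in> {a..b}" for s
  proof -
    have "((\<lambda>s. H_inner M (X s) R) has_field_derivative H_inner M (Xd s) R) (at s within {a..b})"
      using curve s R by (intro has_field_derivative_H_inner[of M X "Xd s" s]) auto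
    then have "(g has_field_derivative H_inner M (Xd s) R - H_inner M (Xd a) R - (s - a) * H_inner M A R)
        (at s within {a..b})"
      unfolding g_def by (auto intro!: derivative_eq_intros simp: power2_eq_square field_simps)
    also have "H_inner M (Xd s) R - H_inner M (Xd a) R - (s - a) * H_inner M A R = g' s"
      unfolding g'_def using X[OF s] X[OF a] A R
      by (simp add: H_inner_diff_left L2space_closed H_inner_scaleR_left)
    finally show ?thesis .
  qed
  moreover have "norm (g' s) \<le> K * (b - a) powr (1 + \<alpha>) * H_norm M R" if s: "s \<in> {a..b}" for s
  proof (cases "s = a")
    case True
    then show ?thesis unfolding g'_def H_inner_def using \<open>K \<ge> 0\<close> by (simp add: H_norm_nonneg)
  next
    case False
    then have "s \<in> {a<..b}" using s by auto
    have "norm (g' s) \<le> H_norm M (\<lambda>x. Xd s x - Xd a x - (s - a) *\<^sub>R A x) * H_norm M R"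
      unfolding g'_def using X[OF s] X[OF a] A R
      by (simp add: H_inner_Cauchy_Schwarz L2space_closed)
    also have "\<dots> \<le> K * (s - a) powr (1 + \<alpha>) * H_norm M R"
      using holder \<open>s \<in> {a<..b}\<close> by (intro mult_right_mono) (auto simp: H_norm_nonneg)
    also have "\<dots> \<le> K * (b - a) powr (1 + \<alpha>) * H_norm M R"
      using s \<open>K \<ge> 0\<close> \<open>\<alpha> \<ge> 0\<close>
      by (intro mult_right_mono mult_left_mono powr_mono2) (auto simp: H_norm_nonneg)
    finally show ?thesis .
  qed
  ultimately have "norm (g b - g a) \<le> K * (b - a) powr (1 + \<alpha>) * H_norm M R * norm (b - a)"
    using \<open>a \<le> b\<close> by (intro field_differentiable_bound[of "{a..b}"]) auto
  moreover have "g b - g a = H_inner M (\<lambda>x. X b x - X a x - (b - a) *\<^sub>R Xd a x - ((b - a)^2 / 2) *\<^sub>R A x) R"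
    unfolding g_def using X[OF a] X[OF b] A R
    by (simp add: H_inner_diff_left L2space_closed H_inner_scaleR_left)
  ultimately show ?thesis using \<open>a \<le> b\<close> by simp
qed

lemma trapezoidal_remainder_split:
  fixes x0 x1 v0 v1 a :: "'a::real_vector"
  shows "x1 - x0 - (h / 2) *\<^sub>R (v0 + v1)
    = (x1 - x0 - h *\<^sub>R v0 - (h^2 / 2) *\<^sub>R a) - (h / 2) *\<^sub>R (v1 - v0 - h *\<^sub>R a)"
proof -
  have "h *\<^sub>R v0 = (h / 2) *\<^sub>R v0 + (h / 2) *\<^sub>R v0"
    by (simp flip: scaleR_add_left)
  moreover have "(h^2 / 2) *\<^sub>R a = (h / 2) *\<^sub>R h *\<^sub>R a"
    by (simp add: power2_eq_square)
  ultimately show ?thesis by (simp add: algebra_simps)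
qed

text \<open>With h = b - a, the trapezoidal remainder R splits as T1 - (h/2) T2, where T1 is the
  second-order Taylor remainder of X and T2 the first-order one of its derivative; pairing R with
  itself and bounding both pieces against R gives a bound on the norm of R.\<close>
lemma trapezoidal_truncation_error:
  assumes curve: "\<forall>t\<in>{a..b}. X t \<in> L2space M \<and> Xd t \<in> L2space M \<and> has_H_derivative M X (Xd t) t {a..b}"
    and A: "A \<in> L2space M"
    and holder: "\<forall>t\<in>{a<..b}. H_norm M (\<lambda>x. Xd t x - Xd a x - (t - a) *\<^sub>R A x) \<le> K * (t - a) powr (1 + \<alpha>)"
    and "K \<ge> 0" "a < b" "\<alpha> \<ge> 0"
  shows "H_norm M (\<lambda>x. X b x - X a x - ((b - a) / 2) *\<^sub>R (Xd a x + Xd b x))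
    \<le> 3 / 2 * K * (b - a) powr (1 + \<alpha>) * (b - a)"
proof -
  define h where "h = b - a"
  define R where "R x = X b x - X a x - (h / 2) *\<^sub>R (Xd a x + Xd b x)" for x
  define T1 where "T1 x = X b x - X a x - h *\<^sub>R Xd a x - (h^2 / 2) *\<^sub>R A x" for x
  define T2 where "T2 x = Xd b x - Xd a x - h *\<^sub>R A x" for x
  define c where "c = K * h powr (1 + \<alpha>)"
  have "h > 0" "c \<ge> 0" unfolding h_def c_def using \<open>a < b\<close> \<open>K \<ge> 0\<close> by auto
  have X: "X t \<in> L2space M" "Xd t \<in> L2space M" if "t \<in> {a..b}" for t
    using curve that by auto
  have "a \<in> {a..b}" "b \<in> {a..b}" using \<open>a < b\<close> by auto
  then have L2: "R \<in> L2space M" "T1 \<in> L2space M" "T2 \<in> L2space M"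
    unfolding R_def T1_def T2_def using X A by (auto intro!: L2space_closed)
  have T1_bound: "\<bar>H_inner M T1 R\<bar> \<le> c * H_norm M R * h"
    unfolding T1_def c_def h_def using \<open>a < b\<close>
    by (intro H_inner_Taylor_remainder_bound[OF curve A L2(1) holder]) (use assms in auto)
  have "\<bar>H_inner M T2 R\<bar> \<le> H_norm M T2 * H_norm M R"
    using L2 by (intro H_inner_Cauchy_Schwarz)
  also have "\<dots> \<le> c * H_norm M R"
    unfolding T2_def c_def h_def using holder \<open>a < b\<close> by (intro mult_right_mono) (auto simp: H_norm_nonneg)
  finally have T2_bound: "\<bar>H_inner M T2 R\<bar> \<le> c * H_norm M R" .
  have R_split: "R = (\<lambda>x. T1 x - (h / 2) *\<^sub>R T2 x)"
    unfolding R_def T1_def T2_def by (rule ext) (rule trapezoidal_remainder_split)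
  have "H_norm M R ^ 2 = H_inner M (\<lambda>x. T1 x - (h / 2) *\<^sub>R T2 x) R"
    by (simp only: H_inner_self flip: R_split)
  also have "\<dots> = H_inner M T1 R - (h / 2) * H_inner M T2 R"
    using L2 by (simp add: H_inner_diff_left L2space_closed H_inner_scaleR_left)
  also have "\<dots> \<le> c * H_norm M R * h + (h / 2) * (c * H_norm M R)"
  proof -
    have "- H_inner M T2 R \<le> c * H_norm M R" using T2_bound by linarith
    then have "(h / 2) * (- H_inner M T2 R) \<le> (h / 2) * (c * H_norm M R)"
      using \<open>h > 0\<close> by (intro mult_left_mono) auto
    then show ?thesis using T1_bound by linarith
  qed
  finally have "H_norm M R * H_norm M R \<le> (3 / 2 * c * h) * H_norm M R"
    by (simp add: power2_eq_square algebra_simps)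
  then have "H_norm M R \<le> 3 / 2 * c * h"
    using \<open>h > 0\<close> \<open>c \<ge> 0\<close> H_norm_nonneg[of M R]
    by (cases "H_norm M R = 0") (auto simp: mult_le_cancel_right)
  then show ?thesis unfolding R_def c_def h_def by simp
qed

lemma frechet_gradient_L2space:
  "is_frechet_gradient M \<phi> G \<Longrightarrow> \<xi> \<in> L2space M \<Longrightarrow> G \<xi> \<in> L2space M"
  unfolding is_frechet_gradient_def by blast

lemma trap_obj_shift_bound:
  assumes Y: "Y \<in> L2space M" and Z: "Z \<in> L2space M" and w: "w \<in> L2space M"
    and GZ: "G Z \<in> L2space M"
    and lift: "lift M \<phi> (\<lambda>x. Y x - s *\<^sub>R w x) \<le> lift M \<phi> Y - s * H_inner M (G Y) w + e"
  shows "trap_obj M \<phi> G \<tau> Z (\<lambda>x. Y x - s *\<^sub>R w x) \<le> trap_obj M \<phi> G \<tau> Z Y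
    + (e - s * H_inner M (G Y) w - s * H_inner M (G Z) w) / 2
    + (s^2 * H_norm M w ^ 2 - 2 * s * H_inner M (\<lambda>x. Y x - Z x) w) / (2 * \<tau>)"
proof -
  have YZ: "(\<lambda>x. Y x - Z x) \<in> L2space M" using Y Z by (rule L2space_diff)
  have "H_inner M (G Z) (\<lambda>x. Y x - s *\<^sub>R w x) = H_inner M (G Z) Y - s * H_inner M (G Z) w"
    unfolding H_inner_commute[of M "G Z"] using Y w GZ
    by (simp add: H_inner_diff_left H_inner_scaleR_left L2space_closed)
  moreover have "(\<lambda>x. Y x - s *\<^sub>R w x - Z x) = (\<lambda>x. (Y x - Z x) + (- s) *\<^sub>R w x)" by auto
  then have "H_norm M (\<lambda>x. Y x - s *\<^sub>R w x - Z x) ^ 2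
      = H_norm M (\<lambda>x. Y x - Z x) ^ 2 - 2 * s * H_inner M (\<lambda>x. Y x - Z x) w + s^2 * H_norm M w ^ 2"
    using H_norm_add_square[OF YZ L2space_scaleR[OF w], of "- s"]
    unfolding H_norm_scaleR H_inner_commute[of M "\<lambda>x. Y x - Z x"] H_inner_scaleR_left
    by (simp add: power_mult_distrib)
  ultimately show ?thesis
    using lift unfolding trap_obj_def by (simp add: add_divide_distrib diff_divide_distrib)
qed

text \<open>The residual w of the trapezoidal equation is the gradient of the step objective, up to
  the factor 1/tau, so moving from the minimiser by a small multiple of -w would strictly decrease
  the objective.\<close>
lemma trapezoidal_step_optimality:
  assumes grad: "is_frechet_gradient M \<phi> G" and Y: "Y \<in> L2space M" and Z: "Z \<in> L2space M"
    and "\<tau> > 0" and min: "\<forall>\<xi>\<in>L2space M. trap_obj M \<phi> G \<tau> Z Y \<le> trap_obj M \<phi> G \<tau> Z \<xi>"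
  shows "H_norm M (\<lambda>x. Y x - Z x + (\<tau> / 2) *\<^sub>R (G Y x + G Z x)) = 0"
proof (rule ccontr)
  define w where "w = (\<lambda>x. Y x - Z x + (\<tau> / 2) *\<^sub>R (G Y x + G Z x))"
  define n where "n = H_norm M w"
  assume "H_norm M (\<lambda>x. Y x - Z x + (\<tau> / 2) *\<^sub>R (G Y x + G Z x)) \<noteq> 0"
  then have "n > 0" unfolding n_def w_def using H_norm_nonneg[of M] by (simp add: order_less_le)
  have G: "G Y \<in> L2space M" "G Z \<in> L2space M"
    using frechet_gradient_L2space[OF grad] Y Z by auto
  have YZ: "(\<lambda>x. Y x - Z x) \<in> L2space M" using Y Z by (rule L2space_diff)
  have w: "w \<in> L2space M" unfolding w_def using Y Z G by (intro L2space_closed)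
  define a where "a = H_inner M (G Y) w"
  define b where "b = H_inner M (G Z) w"
  define c where "c = H_inner M (\<lambda>x. Y x - Z x) w"
  have "n^2 = H_inner M (\<lambda>x. (Y x - Z x) + (\<tau> / 2) *\<^sub>R (G Y x + G Z x)) w"
    unfolding n_def H_inner_self[symmetric] by (subst (1) w_def) (rule refl)
  also have "\<dots> = c + (\<tau> / 2) * (a + b)"
    unfolding a_def b_def c_def using YZ G w
    by (simp add: H_inner_add_left H_inner_scaleR_left L2space_closed)
  finally have n_square: "c = n^2 - (\<tau> / 2) * (a + b)" by simp
  define \<epsilon> where "\<epsilon> = n / (2 * \<tau>)"
  have "\<epsilon> > 0" unfolding \<epsilon>_def using \<open>n > 0\<close> \<open>\<tau> > 0\<close> by simp
  then obtain \<delta> where "\<delta> > 0" and \<delta>: "\<And>\<eta>. \<eta> \<in> L2space M \<Longrightarrow> H_norm M (\<lambda>x. \<eta> x - Y x) < \<delta> \<Longrightarrow>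
      \<bar>lift M \<phi> \<eta> - lift M \<phi> Y - H_inner M (G Y) (\<lambda>x. \<eta> x - Y x)\<bar> \<le> \<epsilon> * H_norm M (\<lambda>x. \<eta> x - Y x)"
    using grad Y unfolding is_frechet_gradient_def by blast
  define s where "s = min 1 (\<delta> / (2 * n))"
  have "0 < s" "s \<le> 1" unfolding s_def using \<open>\<delta> > 0\<close> \<open>n > 0\<close> by auto
  have "s * n \<le> \<delta> / (2 * n) * n" unfolding s_def using \<open>n > 0\<close> by (intro mult_right_mono) auto
  then have "s * n < \<delta>" using \<open>\<delta> > 0\<close> \<open>n > 0\<close> by simp
  define \<eta> where "\<eta> = (\<lambda>x. Y x - s *\<^sub>R w x)"
  have \<eta>: "\<eta> \<in> L2space M" unfolding \<eta>_def using Y w by (intro L2space_closed)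
  have \<eta>_Y: "(\<lambda>x. \<eta> x - Y x) = (\<lambda>x. (- s) *\<^sub>R w x)" unfolding \<eta>_def by auto
  have "H_norm M (\<lambda>x. \<eta> x - Y x) = s * n"
    unfolding \<eta>_Y H_norm_scaleR n_def using \<open>s > 0\<close> by simp
  moreover have "H_inner M (G Y) (\<lambda>x. \<eta> x - Y x) = - s * a"
    unfolding \<eta>_Y a_def H_inner_commute[of M "G Y"] H_inner_scaleR_left ..
  ultimately have "lift M \<phi> \<eta> \<le> lift M \<phi> Y - s * a + \<epsilon> * s * n"
    using \<delta>[OF \<eta>] \<open>s * n < \<delta>\<close> by (simp add: abs_le_iff)
  from trap_obj_shift_bound[OF Y Z w G(2) this[unfolded \<eta>_def a_def], where \<tau> = \<tau>]
  have "trap_obj M \<phi> G \<tau> Z \<eta> \<le> trap_obj M \<phi> G \<tau> Z Y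
      + (\<epsilon> * s * n - s * a - s * b) / 2 + (s^2 * n^2 - 2 * s * c) / (2 * \<tau>)"
    unfolding \<eta>_def a_def b_def c_def n_def .
  also have "\<dots> = trap_obj M \<phi> G \<tau> Z Y + s * n^2 * (s - 3 / 2) / (2 * \<tau>)"
    using \<open>\<tau> > 0\<close> unfolding n_square \<epsilon>_def by (simp add: field_simps power2_eq_square)
  also have "\<dots> < trap_obj M \<phi> G \<tau> Z Y"
    using \<open>0 < s\<close> \<open>s \<le> 1\<close> \<open>n > 0\<close> \<open>\<tau> > 0\<close> by (simp add: divide_neg_pos mult_pos_neg)
  finally show False using min \<eta> by force
qed

lemma L_alpha_bound:
  assumes "bdd_above (holder_ratios M T \<alpha> Xd Xdd)" "t \<in> {0..T}" "s \<in> {0..T}" "t \<noteq> s"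
  shows "H_norm M (\<lambda>x. Xd t x - Xd s x - (t - s) *\<^sub>R Xdd s x) \<le> L_alpha M T \<alpha> Xd Xdd * \<bar>t - s\<bar> powr (1 + \<alpha>)"
proof -
  have "H_norm M (\<lambda>x. Xd t x - Xd s x - (t - s) *\<^sub>R Xdd s x) / \<bar>t - s\<bar> powr (1 + \<alpha>)
      \<in> holder_ratios M T \<alpha> Xd Xdd"
    unfolding holder_ratios_def using assms(2-4) by blast
  then have "H_norm M (\<lambda>x. Xd t x - Xd s x - (t - s) *\<^sub>R Xdd s x) / \<bar>t - s\<bar> powr (1 + \<alpha>)
      \<le> L_alpha M T \<alpha> Xd Xdd"
    unfolding L_alpha_def using assms(1) by (rule cSup_upper)
  moreover have "\<bar>t - s\<bar> powr (1 + \<alpha>) > 0" using assms(4) by simp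
  ultimately show ?thesis by (simp add: divide_le_eq mult.commute)
qed

lemma L_alpha_nonneg:
  assumes "bdd_above (holder_ratios M T \<alpha> Xd Xdd)" "T > 0"
  shows "L_alpha M T \<alpha> Xd Xdd \<ge> 0"
proof -
  have "H_norm M (\<lambda>x. Xd T x - Xd 0 x - (T - 0) *\<^sub>R Xdd 0 x) / \<bar>T - 0\<bar> powr (1 + \<alpha>)
      \<in> holder_ratios M T \<alpha> Xd Xdd"
    unfolding holder_ratios_def using assms(2) by fastforce
  then have "H_norm M (\<lambda>x. Xd T x - Xd 0 x - (T - 0) *\<^sub>R Xdd 0 x) / \<bar>T - 0\<bar> powr (1 + \<alpha>)
      \<le> L_alpha M T \<alpha> Xd Xdd"
    unfolding L_alpha_def using assms(1) by (rule cSup_upper)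
  then show ?thesis by (smt (verit) H_norm_nonneg divide_nonneg_nonneg powr_ge_zero)
qed

lemma trapezoidal_truncation_error_L_alpha:
  assumes X_in: "\<forall>t\<ge>0. X t \<in> L2space M"
    and X_deriv: "\<forall>t\<ge>0. Xd t \<in> L2space M \<and> has_H_derivative M X (Xd t) t {0..}"
    and Xdd: "\<forall>t\<in>{0..T}. Xdd t \<in> L2space M" and holder: "bdd_above (holder_ratios M T \<alpha> Xd Xdd)"
    and "0 \<le> a" "a < b" "b \<le> T" "\<alpha> \<ge> 0"
  shows "H_norm M (\<lambda>x. X b x - X a x - ((b - a) / 2) *\<^sub>R (Xd a x + Xd b x))
    \<le> 3 / 2 * L_alpha M T \<alpha> Xd Xdd * (b - a) powr (1 + \<alpha>) * (b - a)"
proof (rule trapezoidal_truncation_error)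
  show "\<forall>t\<in>{a..b}. X t \<in> L2space M \<and> Xd t \<in> L2space M \<and> has_H_derivative M X (Xd t) t {a..b}"
  proof
    fix t assume "t \<in> {a..b}"
    then show "X t \<in> L2space M \<and> Xd t \<in> L2space M \<and> has_H_derivative M X (Xd t) t {a..b}"
      using X_in X_deriv \<open>0 \<le> a\<close> has_H_derivative_subset[of M X "Xd t" t "{0..}" "{a..b}"] by auto
  qed
  show "Xdd a \<in> L2space M" using Xdd assms(5-7) by auto
  show "\<forall>t\<in>{a<..b}. H_norm M (\<lambda>x. Xd t x - Xd a x - (t - a) *\<^sub>R Xdd a x)
      \<le> L_alpha M T \<alpha> Xd Xdd * (t - a) powr (1 + \<alpha>)"
  proof
    fix t assume "t \<in> {a<..b}"
    then show "H_norm M (\<lambda>x. Xd t x - Xd a x - (t - a) *\<^sub>R Xdd a x)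
        \<le> L_alpha M T \<alpha> Xd Xdd * (t - a) powr (1 + \<alpha>)"
      using L_alpha_bound[OF holder, of t a] assms(5-7) by simp
  qed
  show "L_alpha M T \<alpha> Xd Xdd \<ge> 0" using L_alpha_nonneg[OF holder] assms(5-7) by simp
qed (use assms in simp_all)

lemma implicit_recursion_bound:
  fixes q e0 e1 r :: real
  assumes "0 \<le> q" "q \<le> 1 / 2" "e0 \<ge> 0" "r \<ge> 0"
    and rec: "e1 \<le> e0 + q * e1 + q * e0 + r"
  shows "e1 \<le> exp (4 * q) * e0 + 2 * r"
proof -
  have "q * (2 * q) \<le> q * 1"
    using assms(1,2) by (intro mult_left_mono) auto
  then have "1 + q \<le> (1 - q) * (1 + 4 * q)"
    by (simp add: algebra_simps)
  also have "\<dots> \<le> (1 - q) * exp (4 * q)"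
    using exp_ge_add_one_self[of "4 * q"] assms(2) by (intro mult_left_mono) auto
  finally have "(1 + q) * e0 \<le> (1 - q) * exp (4 * q) * e0"
    using assms(3) by (intro mult_right_mono) auto
  then have "(1 - q) * (e1 - exp (4 * q) * e0) \<le> r"
    using rec by (simp add: algebra_simps)
  moreover have "e1 - exp (4 * q) * e0 \<le> 2 * (1 - q) * (e1 - exp (4 * q) * e0)"
    if "e1 - exp (4 * q) * e0 \<ge> 0"
    using that assms(2) mult_right_mono[of 1 "2 * (1 - q)" "e1 - exp (4 * q) * e0"] by simp
  ultimately show ?thesis
    using assms(4) by (cases "e1 - exp (4 * q) * e0 \<ge> 0") (auto simp: algebra_simps)
qed

text \<open>Subtracting the trapezoidal step for the flow (exact up to the truncation error) from the
  scheme's step leaves the previous error, a Lipschitz-controlled gradient difference, the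
  truncation error and some null terms; the implicit term is absorbed since L tau \<le> 1.\<close>
lemma trapezoidal_error_recursion:
  assumes G_L2: "\<And>\<xi>. \<xi> \<in> L2space M \<Longrightarrow> G \<xi> \<in> L2space M"
    and lipschitz: "\<And>\<xi> \<zeta>. \<xi> \<in> L2space M \<Longrightarrow> \<zeta> \<in> L2space M \<Longrightarrow>
      H_norm M (\<lambda>x. G \<xi> x - G \<zeta> x) \<le> L * H_norm M (\<lambda>x. \<xi> x - \<zeta> x)"
    and "0 \<le> L" "0 < \<tau>" "L * \<tau> \<le> 1"
    and L2: "Y \<in> L2space M" "Z \<in> L2space M" "U \<in> L2space M" "V \<in> L2space M"
      "DU \<in> L2space M" "DV \<in> L2space M"
    and step: "H_norm M (\<lambda>x. Y x - Z x + (\<tau> / 2) *\<^sub>R (G Y x + G Z x)) = 0"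
    and flow: "H_norm M (\<lambda>x. DU x + G U x) = 0" "H_norm M (\<lambda>x. DV x + G V x) = 0"
    and trunc: "H_norm M (\<lambda>x. V x - U x - (\<tau> / 2) *\<^sub>R (DU x + DV x)) \<le> r"
  shows "H_norm M (\<lambda>x. Y x - V x) \<le> exp (2 * L * \<tau>) * H_norm M (\<lambda>x. Z x - U x) + 2 * r"
proof -
  define e1 where "e1 = H_norm M (\<lambda>x. Y x - V x)"
  define e0 where "e0 = H_norm M (\<lambda>x. Z x - U x)"
  define d where "d x = (G Y x - G V x) + (G Z x - G U x)" for x
  define R where "R x = V x - U x - (\<tau> / 2) *\<^sub>R (DU x + DV x)" for x
  define N where "N x = (Y x - Z x + (\<tau> / 2) *\<^sub>R (G Y x + G Z x))
      - (\<tau> / 2) *\<^sub>R ((DU x + G U x) + (DV x + G V x))" for x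
  have GL2: "G Y \<in> L2space M" "G Z \<in> L2space M" "G U \<in> L2space M" "G V \<in> L2space M"
    using G_L2 L2 by auto
  have L2': "d \<in> L2space M" "R \<in> L2space M" "N \<in> L2space M" "(\<lambda>x. Z x - U x) \<in> L2space M"
    unfolding d_def R_def N_def using L2 GL2 by (auto intro!: L2space_closed)
  have "H_norm M N \<le> H_norm M (\<lambda>x. Y x - Z x + (\<tau> / 2) *\<^sub>R (G Y x + G Z x))
      + \<bar>\<tau> / 2\<bar> * H_norm M (\<lambda>x. (DU x + G U x) + (DV x + G V x))"
    unfolding N_def H_norm_scaleR[symmetric] using L2 GL2
    by (intro H_norm_triangle_diff) (auto intro!: L2space_closed)
  also have "\<dots> \<le> 0 + \<bar>\<tau> / 2\<bar> * (H_norm M (\<lambda>x. DU x + G U x) + H_norm M (\<lambda>x. DV x + G V x))"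
    unfolding step using L2 GL2
    by (intro add_mono mult_left_mono H_norm_triangle) (auto intro!: L2space_closed)
  finally have "H_norm M N \<le> 0" unfolding flow by simp
  define z where "z x = (Z x - U x) - (\<tau> / 2) *\<^sub>R d x" for x
  have z: "z \<in> L2space M" unfolding z_def using L2 L2' by (intro L2space_closed)
  have "(\<lambda>x. Y x - V x) = (\<lambda>x. (z x - R x) + N x)"
    unfolding z_def d_def R_def N_def by (auto simp: algebra_simps)
  then have "e1 \<le> H_norm M (\<lambda>x. z x - R x) + H_norm M N"
    unfolding e1_def using z L2' by (simp add: H_norm_triangle L2space_closed)
  also have "\<dots> \<le> (H_norm M z + H_norm M R) + 0"
    using z L2' \<open>H_norm M N \<le> 0\<close> by (intro add_mono H_norm_triangle_diff)
  also have "\<dots> \<le> (e0 + \<tau> / 2 * (L * e1 + L * e0)) + r"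
  proof -
    have "H_norm M d \<le> L * e1 + L * e0"
      unfolding d_def e1_def e0_def using L2 GL2
      by (intro order.trans[OF H_norm_triangle] add_mono lipschitz) (auto intro!: L2space_closed)
    then have "\<tau> / 2 * H_norm M d \<le> \<tau> / 2 * (L * e1 + L * e0)"
      using \<open>0 < \<tau>\<close> by (intro mult_left_mono) auto
    moreover have "H_norm M z \<le> e0 + \<tau> / 2 * H_norm M d"
      unfolding z_def e0_def using H_norm_triangle_diff[OF L2'(4) L2space_scaleR[OF L2'(1)], of "\<tau> / 2"]
        \<open>0 < \<tau>\<close> by (simp add: H_norm_scaleR)
    ultimately have "H_norm M z \<le> e0 + \<tau> / 2 * (L * e1 + L * e0)" by linarith
    then show ?thesis using trunc unfolding R_def by simp
  qed
  finally have "e1 \<le> e0 + (L * \<tau> / 2) * e1 + (L * \<tau> / 2) * e0 + r"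
    by (simp add: algebra_simps)
  then have "e1 \<le> exp (4 * (L * \<tau> / 2)) * e0 + 2 * r"
    using assms(3-5) trunc H_norm_nonneg[of M] unfolding e0_def
    by (intro implicit_recursion_bound) (auto simp: R_def order.trans[OF H_norm_nonneg])
  then show ?thesis unfolding e1_def e0_def by (simp add: mult.assoc)
qed

lemma discrete_gronwall_exp:
  fixes E :: "nat \<Rightarrow> real"
  assumes step: "\<And>k. k < n \<Longrightarrow> E (Suc k) \<le> exp (\<beta> * \<tau>) * E k + c * \<tau>"
    and "\<beta> > 0" "c \<ge> 0" "E 0 \<ge> 0" "real n * \<tau> \<le> T"
  shows "E n \<le> exp (\<beta> * T) * E 0 + c / \<beta> * (exp (\<beta> * T) - 1)"
proof -
  let ?p = "exp (\<beta> * \<tau>)"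
  have "\<beta> * \<tau> \<le> ?p - 1" using exp_ge_add_one_self[of "\<beta> * \<tau>"] by linarith
  then have "c / \<beta> * (\<beta> * \<tau>) \<le> c / \<beta> * (?p - 1)"
    using assms(2,3) by (intro mult_left_mono) auto
  then have c_\<tau>: "c * \<tau> \<le> c / \<beta> * (?p - 1)" using assms(2) by simp
  have "E k \<le> exp (\<beta> * (real k * \<tau>)) * E 0 + c / \<beta> * (exp (\<beta> * (real k * \<tau>)) - 1)" if "k \<le> n" for k
    using that
  proof (induction k)
    case 0
    then show ?case by simp
  next
    case (Suc k)
    let ?q = "exp (\<beta> * (real k * \<tau>))"
    have "E (Suc k) \<le> ?p * E k + c * \<tau>" using step Suc.prems by simp
    also have "\<dots> \<le> ?p * (?q * E 0 + c / \<beta> * (?q - 1)) + c / \<beta> * (?p - 1)"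
      using Suc c_\<tau> by (intro add_mono mult_left_mono) auto
    also have "\<dots> = exp (\<beta> * (real (Suc k) * \<tau>)) * E 0 + c / \<beta> * (exp (\<beta> * (real (Suc k) * \<tau>)) - 1)"
      by (simp add: mult_exp_exp[symmetric] algebra_simps)
    finally show ?case .
  qed
  moreover have "exp (\<beta> * (real n * \<tau>)) \<le> exp (\<beta> * T)" using assms(2,5) by simp
  then have "exp (\<beta> * (real n * \<tau>)) * E 0 + c / \<beta> * (exp (\<beta> * (real n * \<tau>)) - 1)
      \<le> exp (\<beta> * T) * E 0 + c / \<beta> * (exp (\<beta> * T) - 1)"
    using assms(2-4) by (intro add_mono mult_left_mono mult_right_mono diff_right_mono) auto
  ultimately show ?thesis by fastforce
qed

lemma W2_distr_le_H_norm:
  fixes M :: "'a::euclidean_space measure"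
  assumes P: "prob_space M" and f: "f \<in> L2space M" and g: "g \<in> L2space M"
  shows "W2 (distr M borel f) (distr M borel g) \<le> H_norm M (\<lambda>x. g x - f x)"
proof -
  have fg: "(\<lambda>x. (f x, g x)) \<in> measurable M borel"
    using f g unfolding L2space_def by (auto intro: borel_measurable_Pair)
  define \<pi> where "\<pi> = distr M borel (\<lambda>x. (f x, g x))"
  have fst_snd: "fst \<in> borel_measurable (borel :: ('a \<times> 'a) measure)"
    "snd \<in> borel_measurable (borel :: ('a \<times> 'a) measure)"
    by (intro borel_measurable_continuous_onI continuous_intros)+
  have cost: "(\<lambda>p::'a \<times> 'a. ennreal (norm (fst p - snd p) ^ 2)) \<in> borel_measurable borel"
    by (intro borel_measurable_continuous_onI continuous_on_ennreal continuous_intros)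
  have "\<pi> \<in> couplings (distr M borel f) (distr M borel g)"
    unfolding couplings_def \<pi>_def
    using prob_space.prob_space_distr[OF P fg] distr_distr[OF fst_snd(1) fg] distr_distr[OF fst_snd(2) fg]
    by (simp add: comp_def)
  then have "(INF \<pi>\<in>couplings (distr M borel f) (distr M borel g). \<integral>\<^sup>+ p. ennreal (norm (fst p - snd p) ^ 2) \<partial>\<pi>)
      \<le> (\<integral>\<^sup>+ p. ennreal (norm (fst p - snd p) ^ 2) \<partial>\<pi>)"
    by (rule INF_lower)
  also have "\<dots> = (\<integral>\<^sup>+ x. ennreal (norm (g x - f x) ^ 2) \<partial>M)"
    unfolding \<pi>_def using cost by (simp add: nn_integral_distr[OF fg] norm_minus_commute)
  also have "\<dots> = ennreal (\<integral>x. norm (g x - f x) ^ 2 \<partial>M)"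
    using L2space_diff[OF g f] unfolding L2space_def by (intro nn_integral_eq_integral) auto
  finally show ?thesis
    unfolding W2_def H_norm_def
    by (intro real_sqrt_le_mono enn2real_leI) (simp_all add: integral_nonneg_AE)
qed

lemma trapezoidal_scheme_error_step:
  fixes M :: "'a::euclidean_space measure"
  assumes P: "prob_space M" and grad: "is_frechet_gradient M \<phi> G"
    and lip: "bdd_above (lip_ratios M G)" "Lip_const M G \<ge> 0" "Lip_const M G * \<tau> \<le> 1"
    and X_in: "\<forall>t\<ge>0. X t \<in> L2space M"
    and X_deriv: "\<forall>t\<ge>0. Xd t \<in> L2space M \<and> has_H_derivative M X (Xd t) t {0..}"
    and X_ode: "\<forall>t\<ge>0. H_norm M (\<lambda>x. Xd t x + G (X t) x) = 0"
    and Xdd: "\<forall>t\<in>{0..T}. Xdd t \<in> L2space M" and holder: "bdd_above (holder_ratios M T \<alpha> Xd Xdd)"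
    and "\<alpha> \<ge> 0" and ab: "0 \<le> a" "a < b" "b \<le> T" "b - a = \<tau>"
    and Y: "Y \<in> L2space M" and Z: "Z \<in> L2space M"
    and min: "\<forall>\<xi>\<in>L2space M. trap_obj M \<phi> G \<tau> Z Y \<le> trap_obj M \<phi> G \<tau> Z \<xi>"
  shows "H_norm M (\<lambda>x. Y x - X b x)
    \<le> exp (2 * Lip_const M G * \<tau>) * H_norm M (\<lambda>x. Z x - X a x)
      + 3 * L_alpha M T \<alpha> Xd Xdd * \<tau> powr (1 + \<alpha>) * \<tau>"
proof -
  have "\<tau> > 0" using ab by simp
  have G_L2: "\<And>\<xi>. \<xi> \<in> L2space M \<Longrightarrow> G \<xi> \<in> L2space M"
    using frechet_gradient_L2space[OF grad] .
  have "H_norm M (\<lambda>x. Y x - X b x)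
    \<le> exp (2 * Lip_const M G * \<tau>) * H_norm M (\<lambda>x. Z x - X a x)
      + 2 * (3 / 2 * L_alpha M T \<alpha> Xd Xdd * \<tau> powr (1 + \<alpha>) * \<tau>)"
  proof (rule trapezoidal_error_recursion[OF G_L2 Lip_const_bound[OF P lip(1) G_L2] lip(2) \<open>\<tau> > 0\<close> lip(3)])
    show "H_norm M (\<lambda>x. X b x - X a x - (\<tau> / 2) *\<^sub>R (Xd a x + Xd b x))
        \<le> 3 / 2 * L_alpha M T \<alpha> Xd Xdd * \<tau> powr (1 + \<alpha>) * \<tau>"
      using trapezoidal_truncation_error_L_alpha[OF X_in X_deriv Xdd holder ab(1-3) \<open>\<alpha> \<ge> 0\<close>] ab(4)
      by simp
    show "H_norm M (\<lambda>x. Y x - Z x + (\<tau> / 2) *\<^sub>R (G Y x + G Z x)) = 0"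
      by (rule trapezoidal_step_optimality[OF grad Y Z \<open>\<tau> > 0\<close> min])
  qed (use G_L2 Y Z X_in X_deriv X_ode ab in auto)
  then show ?thesis by (simp add: ac_simps)
qed

theorem mainTheorem1:
  fixes \<rho>0 :: "'a::euclidean_space measure"
    and \<phi> :: "'a measure \<Rightarrow> real"
    and G :: "('a \<Rightarrow> 'a) \<Rightarrow> ('a \<Rightarrow> 'a)"
    and X Xd Xdd :: "real \<Rightarrow> 'a \<Rightarrow> 'a"
    and Xs :: "nat \<Rightarrow> 'a \<Rightarrow> 'a"
    and T \<alpha> \<tau> :: real
  assumes rho0: "\<rho>0 \<in> P2"
    and grad: "is_frechet_gradient \<rho>0 \<phi> G"
    and bdd: "\<exists>B. \<forall>\<xi>\<in>L2space \<rho>0. \<bar>lift \<rho>0 \<phi> \<xi>\<bar> \<le> B"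
    and bdd_grad: "\<exists>B. \<forall>\<xi>\<in>L2space \<rho>0. H_norm \<rho>0 (G \<xi>) \<le> B"
    and lip: "bdd_above (lip_ratios \<rho>0 G)"
    and lip_pos: "Lip_const \<rho>0 G > 0"
    and X_in: "\<forall>t\<ge>0. X t \<in> L2space \<rho>0"
    and X_init: "H_norm \<rho>0 (\<lambda>x. X 0 x - x) = 0"
    and X_deriv: "\<forall>t\<ge>0. Xd t \<in> L2space \<rho>0 \<and> has_H_derivative \<rho>0 X (Xd t) t {0..}"
    and X_C1: "\<forall>t\<ge>0. H_continuous_at \<rho>0 Xd t {0..}"
    and X_ode: "\<forall>t\<ge>0. H_norm \<rho>0 (\<lambda>x. Xd t x + G (X t) x) = 0"
    and T_pos: "T > 0"
    and alpha: "0 < \<alpha>" "\<alpha> \<le> 1"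
    and Xdd: "\<forall>t\<in>{0..T}. Xdd t \<in> L2space \<rho>0 \<and> has_H_derivative \<rho>0 Xd (Xdd t) t {0..T}"
    and holder: "bdd_above (holder_ratios \<rho>0 T \<alpha> Xd Xdd)"
    and tau: "0 < \<tau>" "\<tau> \<le> 1 / Lip_const \<rho>0 G"
    and Xs0: "Xs 0 \<in> L2space \<rho>0"
    and Xs_step: "\<forall>n. Xs (Suc n) \<in> L2space \<rho>0 \<and>
        (\<forall>\<xi>\<in>L2space \<rho>0. trap_obj \<rho>0 \<phi> G \<tau> (Xs n) (Xs (Suc n)) \<le> trap_obj \<rho>0 \<phi> G \<tau> (Xs n) \<xi>)"
  shows "\<forall>n. real n * \<tau> \<le> T \<longrightarrow>
     W2 (distr \<rho>0 borel (X (real n * \<tau>))) (distr \<rho>0 borel (Xs n))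
        \<le> H_norm \<rho>0 (\<lambda>x. Xs n x - X (real n * \<tau>) x)
     \<and> H_norm \<rho>0 (\<lambda>x. Xs n x - X (real n * \<tau>) x)
        \<le> exp (2 * Lip_const \<rho>0 G * T) * H_norm \<rho>0 (\<lambda>x. Xs 0 x - x)
          + 2 * (L_alpha \<rho>0 T \<alpha> Xd Xdd / Lip_const \<rho>0 G)
              * (exp (2 * Lip_const \<rho>0 G * T) - 1) * \<tau> powr (1 + \<alpha>)"
proof (intro allI impI conjI)
  let ?L = "Lip_const \<rho>0 G" and ?K = "L_alpha \<rho>0 T \<alpha> Xd Xdd" and ?N = "H_norm \<rho>0"
  let ?E = "\<lambda>k. ?N (\<lambda>x. Xs k x - X (real k * \<tau>) x)"
  have P: "prob_space \<rho>0" using rho0 unfolding P2_def by auto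
  have Xs_L2: "Xs k \<in> L2space \<rho>0" for k using Xs0 Xs_step by (cases k) auto
  have L_\<tau>: "?L * \<tau> \<le> 1" using tau lip_pos by (simp add: field_simps)
  fix n assume n: "real n * \<tau> \<le> T"
  show "W2 (distr \<rho>0 borel (X (real n * \<tau>))) (distr \<rho>0 borel (Xs n)) \<le> ?E n"
    using P X_in Xs_L2 tau by (intro W2_distr_le_H_norm) auto
  have "?E (Suc k) \<le> exp (2 * ?L * \<tau>) * ?E k + (3 * ?K * \<tau> powr (1 + \<alpha>)) * \<tau>" if "k < n" for k
  proof (rule trapezoidal_scheme_error_step[OF P grad lip _ _ X_in X_deriv X_ode _ holder])
    have "real (Suc k) * \<tau> \<le> real n * \<tau>" using that tau(1) by (intro mult_right_mono) auto
    then show "real (Suc k) * \<tau> \<le> T" using n by linarith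
  qed (use L_\<tau> lip_pos tau Xdd alpha Xs_L2 Xs_step in \<open>auto simp: algebra_simps\<close>)
  then have "?E n \<le> exp (2 * ?L * T) * ?E 0 + 3 * ?K * \<tau> powr (1 + \<alpha>) / (2 * ?L) * (exp (2 * ?L * T) - 1)"
    using lip_pos L_alpha_nonneg[OF holder T_pos] n
    by (intro discrete_gronwall_exp[where E = ?E]) (auto simp: H_norm_nonneg)
  moreover have "?E 0 \<le> ?N (\<lambda>x. Xs 0 x - x)"
    using H_norm_dist_triangle[OF Xs0 L2space_ident[OF rho0], of "X 0"] X_in X_init
      H_norm_minus_commute[of \<rho>0 "X 0" "\<lambda>x. x"] by simp
  then have "exp (2 * ?L * T) * ?E 0 \<le> exp (2 * ?L * T) * ?N (\<lambda>x. Xs 0 x - x)" by simp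
  moreover have "0 \<le> ?K / ?L * (exp (2 * ?L * T) - 1) * \<tau> powr (1 + \<alpha>)"
    using lip_pos T_pos L_alpha_nonneg[OF holder T_pos] by simp
  moreover have "3 * ?K * \<tau> powr (1 + \<alpha>) / (2 * ?L) * (exp (2 * ?L * T) - 1)
      = 3 / 2 * (?K / ?L * (exp (2 * ?L * T) - 1) * \<tau> powr (1 + \<alpha>))"
    by simp
  ultimately show "?E n \<le> exp (2 * ?L * T) * ?N (\<lambda>x. Xs 0 x - x)
      + 2 * (?K / ?L) * (exp (2 * ?L * T) - 1) * \<tau> powr (1 + \<alpha>)"
    by linarith
qed

end
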